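(* Let $S$ be as in the context. Then $|\mathcal{T}_k(S)|\le|\mathcal{T}_{k+1}(S)|$ for all $1\le k<n$, and for all $1\le k\le k'<n$ the number $m_{k'}$ of edges of the edge-reduced de Bruijn graph $\tilde G_{k'}(S)$, counted with multiplicity, satisfies $m_{k'}\ge|\mathcal{T}_k(S)|$.
   Context: $\Sigma$ is a finite totally ordered alphabet containing a symbol $\$$ smaller than every other symbol. $S$ is a string of length $n\ge 2$ over $\Sigma$ whose last character is $\$$ and in which $\$$ occurs nowhere else. The rotations of $S$ are the $n$ strings $S[i..n]S[1..i-1]$, $i\in[1,n]$. The rotation-trie $\mathcal{T}(S)$ is the trie of the set of rotations of $S$; $\mathcal{T}_k(S)$ denotes its set of nodes at depth $k$ (equivalently, the set of distinct length-$k$ prefixes of rotations of $S$). For $1\le k\le n$ let $Z_k(S)=S[1..n]S[1..k]$. The order-$k$ de Bruijn graph $G_k(S)$ is the directed multigraph with node set $\{Z_k(S)[i..i+k-1]: i\in[1,n]\}$ that, for every $z\in\Sigma^{k+1}$ occurring exactly $m\ge1$ times as a substring of $Z_k(S)$, contains the edge $(z[1..k],z[2..k+1])$ with multiplicity $m$. $x$ is a predecessor of $y$ (and $y$ a successor of $x$) if there is an edge $(x,y)$ of positive multiplicity. An edge $(x,y)$ is fusible if $y$ is the only successor of $x$ and $x$ is the only predecessor of $y$. The edge-reduced de Bruijn graph $\tilde G_k(S)$ is obtained from $G_k(S)$ by setting the multiplicity of every fusible edge to $1$. *)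

theory Defs
  imports Main
begin

(* Strings are lists, positions are 0-based. *)

definition valid_text :: "'a::{linorder,finite} \<Rightarrow> 'a list \<Rightarrow> bool" where
  "valid_text d S \<longleftrightarrow> length S \<ge> 2 \<and> last S = d \<and> d \<notin> set (butlast S)
     \<and> (\<forall>c. c \<noteq> d \<longrightarrow> d < c)"

definition rotations :: "'a list \<Rightarrow> 'a list set" where
  "rotations S = {drop i S @ take i S | i. i < length S}"

(* T_k(S): nodes of the rotation trie at depth k = distinct length-k prefixes of rotations *)
definition trie_level :: "'a list \<Rightarrow> nat \<Rightarrow> 'a list set" where
  "trie_level S k = (\<lambda>r. take k r) ` rotations S"

definition Zk :: "'a list \<Rightarrow> nat \<Rightarrow> 'a list" where
  "Zk S k = S @ take k S"

definition dbg_nodes :: "'a list \<Rightarrow> nat \<Rightarrow> 'a list set" where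
  "dbg_nodes S k = {take k (drop i (Zk S k)) | i. i < length S}"

definition dbg_mult :: "'a list \<Rightarrow> nat \<Rightarrow> 'a list \<Rightarrow> 'a list \<Rightarrow> nat" where
  "dbg_mult S k x y = card {i. i + k + 1 \<le> length (Zk S k) \<and>
      take k (drop i (Zk S k)) = x \<and> take k (drop (Suc i) (Zk S k)) = y}"

definition dbg_succs :: "'a list \<Rightarrow> nat \<Rightarrow> 'a list \<Rightarrow> 'a list set" where
  "dbg_succs S k x = {y. dbg_mult S k x y > 0}"

definition dbg_preds :: "'a list \<Rightarrow> nat \<Rightarrow> 'a list \<Rightarrow> 'a list set" where
  "dbg_preds S k y = {x. dbg_mult S k x y > 0}"

definition fusible :: "'a list \<Rightarrow> nat \<Rightarrow> 'a list \<Rightarrow> 'a list \<Rightarrow> bool" where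
  "fusible S k x y \<longleftrightarrow> dbg_succs S k x = {y} \<and> dbg_preds S k y = {x}"

definition red_mult :: "'a list \<Rightarrow> nat \<Rightarrow> 'a list \<Rightarrow> 'a list \<Rightarrow> nat" where
  "red_mult S k x y = (if fusible S k x y then 1 else dbg_mult S k x y)"

definition red_edge_count :: "'a list \<Rightarrow> nat \<Rightarrow> nat" where
  "red_edge_count S k = (\<Sum>(x,y) \<in> dbg_nodes S k \<times> dbg_nodes S k. red_mult S k x y)"

end

theory Submission
  imports Defs
begin

text \<open>Truncation maps the depth-(k+1) level of the rotation trie onto the depth-k level.
  For k < n the length-k windows of Z_k(S) are exactly the length-k prefixes of rotations,
  so the nodes of G_k(S) are the trie nodes at depth k; and every node has an outgoing edge
  (to the window starting one position later), which keeps multiplicity at least 1 after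
  edge reduction.\<close>

lemma finite_trie_level: "finite (trie_level S k)"
  unfolding trie_level_def rotations_def by simp

lemma trie_level_eq_image_take:
  "k \<le> k' \<Longrightarrow> trie_level S k = take k ` trie_level S k'"
  unfolding trie_level_def image_image by (simp add: min_absorb2)

lemma card_trie_level_mono:
  "k \<le> k' \<Longrightarrow> card (trie_level S k) \<le> card (trie_level S k')"
  using trie_level_eq_image_take card_image_le finite_trie_level by metis

lemma take_rotation_eq_take_Zk:
  assumes "i < length S" "k < length S"
  shows "take k (drop i S @ take i S) = take k (drop i (Zk S k))"
proof -
  have "min (k - (length S - i)) i = k - (length S - i)"
       "min (k - (length S - i)) k = k - (length S - i)"
    using assms by linarith+
  then show ?thesis
    using assms by (simp add: Zk_def take_append)
qed

lemma dbg_nodes_eq_trie_level: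
  assumes "k < length S"
  shows "dbg_nodes S k = trie_level S k"
proof -
  have "dbg_nodes S k = (\<lambda>i. take k (drop i (Zk S k))) ` {..<length S}"
    unfolding dbg_nodes_def by blast
  also have "\<dots> = (\<lambda>i. take k (drop i S @ take i S)) ` {..<length S}"
    using take_rotation_eq_take_Zk[OF _ assms] by (intro image_cong) auto
  also have "\<dots> = trie_level S k"
    unfolding trie_level_def rotations_def by blast
  finally show ?thesis .
qed

lemma finite_dbg_nodes: "finite (dbg_nodes S k)"
  unfolding dbg_nodes_def by simp

lemma dbg_mult_pos_of_window:
  assumes "i + k + 1 \<le> length (Zk S k)"
  shows "0 < dbg_mult S k (take k (drop i (Zk S k))) (take k (drop (Suc i) (Zk S k)))"
proof -
  let ?A = "{j. j + k + 1 \<le> length (Zk S k) \<and>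
    take k (drop j (Zk S k)) = take k (drop i (Zk S k)) \<and>
    take k (drop (Suc j) (Zk S k)) = take k (drop (Suc i) (Zk S k))}"
  have "finite ?A" by (rule finite_subset[of _ "{..length (Zk S k)}"]) auto
  moreover have "i \<in> ?A" using assms by blast
  ultimately show ?thesis
    unfolding dbg_mult_def by (auto simp: card_gt_0_iff)
qed

text \<open>The window after the last start position \<open>n - 1\<close> starts at \<open>n\<close>, where \<open>Z\<^sub>k(S)\<close>
  continues with \<open>S[1..k]\<close>: it is the window at position 0.\<close>

lemma dbg_node_has_successor:
  assumes "k < length S" "x \<in> dbg_nodes S k"
  obtains y where "y \<in> dbg_nodes S k" "0 < dbg_mult S k x y"
proof -
  obtain i where i: "i < length S" "x = take k (drop i (Zk S k))"
    using assms(2) unfolding dbg_nodes_def by blast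
  let ?y = "take k (drop (Suc i) (Zk S k))"
  have "?y \<in> dbg_nodes S k"
  proof (cases "Suc i < length S")
    case True
    then show ?thesis unfolding dbg_nodes_def by blast
  next
    case False
    then have "?y = take k (drop 0 (Zk S k))"
      using i(1) assms(1) by (simp add: Zk_def le_Suc_eq)
    then show ?thesis unfolding dbg_nodes_def using i(1) by force
  qed
  moreover have "0 < dbg_mult S k x ?y"
    using i assms(1) by (intro dbg_mult_pos_of_window[of i k S, folded i(2)]) (simp add: Zk_def)
  ultimately show thesis by (rule that)
qed

lemma red_mult_pos: "0 < dbg_mult S k x y \<Longrightarrow> 0 < red_mult S k x y"
  unfolding red_mult_def by simp

lemma card_dbg_nodes_le_red_edge_count:
  assumes "k < length S"
  shows "card (dbg_nodes S k) \<le> red_edge_count S k"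
proof -
  let ?N = "dbg_nodes S k"
  have "1 \<le> (\<Sum>y\<in>?N. red_mult S k x y)" if x: "x \<in> ?N" for x
  proof -
    obtain y where "y \<in> ?N" "0 < dbg_mult S k x y"
      using dbg_node_has_successor[OF assms x] by blast
    then have "1 \<le> red_mult S k x y" by (simp add: red_mult_pos Suc_leI)
    also have "\<dots> \<le> (\<Sum>y\<in>?N. red_mult S k x y)"
      using \<open>y \<in> ?N\<close> by (intro member_le_sum) (simp_all add: finite_dbg_nodes)
    finally show ?thesis .
  qed
  then have "card ?N \<le> (\<Sum>x\<in>?N. \<Sum>y\<in>?N. red_mult S k x y)"
    using sum_mono[of ?N "\<lambda>_. 1"] by (metis card_eq_sum)
  also have "\<dots> = red_edge_count S k"
    unfolding red_edge_count_def by (rule sum.cartesian_product)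
  finally show ?thesis .
qed

theorem mainTheorem6:
  fixes S :: "'a::{linorder,finite} list" and d :: 'a
  assumes "valid_text d S"
  shows "(\<forall>k. 1 \<le> k \<and> k < length S \<longrightarrow>
            card (trie_level S k) \<le> card (trie_level S (Suc k)))
       \<and> (\<forall>k k'. 1 \<le> k \<and> k \<le> k' \<and> k' < length S \<longrightarrow>
            card (trie_level S k) \<le> red_edge_count S k')"
proof (intro conjI allI impI)
  fix k show "card (trie_level S k) \<le> card (trie_level S (Suc k))"
    by (rule card_trie_level_mono) simp
next
  fix k k' assume k: "1 \<le> k \<and> k \<le> k' \<and> k' < length S"
  then have "card (trie_level S k) \<le> card (trie_level S k')"
    by (intro card_trie_level_mono) simp
  also have "\<dots> = card (dbg_nodes S k')"
    using k by (simp add: dbg_nodes_eq_trie_level)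
  also have "\<dots> \<le> red_edge_count S k'"
    using k by (simp add: card_dbg_nodes_le_red_edge_count)
  finally show "card (trie_level S k) \<le> red_edge_count S k'" .
qed

end
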